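(* Let $(\mathcal X,\mathcal A,\mu)$ be a measurable space with $\sigma$-finite $\mu$, let $p_1,p_2$ be mutually absolutely continuous probability densities w.r.t. $\mu$, $B=p_1/p_2$, $\rho=\int\sqrt{p_1p_2}\,d\mu$. Let $X_1$ have density $p_1$ and $X_2$ have density $p_2$, independent, and define $\Delta_t=B(X_2)^t-B(X_1)^{t-1}$. Then $\mathrm{Var}(\Delta_{1/2})=2(1-\rho^2)<\infty$, whereas for every $t\neq 1/2$, $$\sup_{(p_1,p_2)\in\mathcal P_{\mathrm{ac}}}\mathrm{Var}(\Delta_t)=+\infty.$$
   Context: Mutual absolute continuity: $p_1(x)=0\iff p_2(x)=0$ for $\mu$-a.e. $x$. $\mathcal P_{\mathrm{ac}}$ denotes the class of all pairs of mutually absolutely continuous probability densities. Variances take values in $[0,\infty]$, equal to $+\infty$ when the second moment is infinite. *)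

theory Defs
  imports "HOL-Probability.Probability"
begin

definition is_prob_density :: "'a measure \<Rightarrow> ('a \<Rightarrow> real) \<Rightarrow> bool" where
  "is_prob_density M p \<longleftrightarrow> p \<in> borel_measurable M \<and> (\<forall>x\<in>space M. 0 \<le> p x)
      \<and> (\<integral>\<^sup>+ x. ennreal (p x) \<partial>M) = 1"

definition Pac :: "'a measure \<Rightarrow> (('a \<Rightarrow> real) \<times> ('a \<Rightarrow> real)) set" where
  "Pac M = {(p1, p2). is_prob_density M p1 \<and> is_prob_density M p2
              \<and> (AE x in M. p1 x = 0 \<longleftrightarrow> p2 x = 0)}"

definition evar :: "'a measure \<Rightarrow> ('a \<Rightarrow> real) \<Rightarrow> ennreal" where
  "evar P Y = (if integrable P (\<lambda>x. (Y x)\<^sup>2)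
               then ennreal (\<integral> x. (Y x - (\<integral> y. Y y \<partial>P))\<^sup>2 \<partial>P)
               else \<infinity>)"

definition lratio :: "('a \<Rightarrow> real) \<Rightarrow> ('a \<Rightarrow> real) \<Rightarrow> 'a \<Rightarrow> real" where
  "lratio p1 p2 x = p1 x / p2 x"

text \<open>Var(Delta_t) where Delta_t = B(X2)^t - B(X1)^(t-1), X1 ~ p1, X2 ~ p2 independent:
  the joint law of (X1,X2) is the product of the two density measures.\<close>
definition Delta_var :: "'a measure \<Rightarrow> ('a \<Rightarrow> real) \<Rightarrow> ('a \<Rightarrow> real) \<Rightarrow> real \<Rightarrow> ennreal" where
  "Delta_var M p1 p2 t =
     evar (density M (\<lambda>x. ennreal (p1 x)) \<Otimes>\<^sub>M density M (\<lambda>x. ennreal (p2 x)))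
          (\<lambda>(x1, x2). lratio p1 p2 x2 powr t - lratio p1 p2 x1 powr (t - 1))"

end

theory Submission
  imports Defs
begin

(* Since X1 and X2 are independent, Var(Delta_t) = Var_p2(B^t) + Var_p1(B^(t-1)), and
   B^(t-1) = (p2/p1)^(1-t); so each summand is the variance of a power r of a likelihood ratio p/q
   under its denominator q.  For r = 1/2 this is E_q[p/q] - (E_q[sqrt(p/q)])^2 = 1 - rho^2.
   For r > 1/2 the second moment, a sum of p^(2r) q^(1-2r), is unbounded: on two points, q giving
   mass s/2 to a point of p-mass 1/2 yields a variance of order s^(1-2r).  The case t < 1/2 is the
   mirror image, exchanging p1 with p2 and t with 1 - t. *)

lemma (in pair_prob_space) distr_pair_snd: "distr (M1 \<Otimes>\<^sub>M M2) M2 snd = M2"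
proof (intro measure_eqI)
  fix A assume A: "A \<in> sets (distr (M1 \<Otimes>\<^sub>M M2) M2 snd)"
  then have "emeasure (distr (M1 \<Otimes>\<^sub>M M2) M2 snd) A = emeasure (M1 \<Otimes>\<^sub>M M2) (space M1 \<times> A)"
    by (auto simp: emeasure_distr space_pair_measure dest: sets.sets_into_space
        intro!: arg_cong2[where f=emeasure])
  with A show "emeasure (distr (M1 \<Otimes>\<^sub>M M2) M2 snd) A = emeasure M2 A"
    by (simp add: M2.emeasure_pair_measure_Times M1.emeasure_space_1)
qed simp

lemma (in pair_prob_space)
  fixes g :: "'a \<Rightarrow> 'c::{banach, second_countable_topology}"
  assumes "integrable M1 g"
  shows integrable_pair_fst: "integrable (M1 \<Otimes>\<^sub>M M2) (\<lambda>z. g (fst z))"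
    and integral_pair_fst: "(\<integral>z. g (fst z) \<partial>(M1 \<Otimes>\<^sub>M M2)) = integral\<^sup>L M1 g"
  using assms M2.distr_pair_fst[of M1] integrable_distr_eq[of fst "M1 \<Otimes>\<^sub>M M2" M1 g]
    integral_distr[of fst "M1 \<Otimes>\<^sub>M M2" M1 g]
  by (simp_all add: M1.sigma_finite_measure_axioms)

lemma (in pair_prob_space)
  fixes f :: "'b \<Rightarrow> 'c::{banach, second_countable_topology}"
  assumes "integrable M2 f"
  shows integrable_pair_snd: "integrable (M1 \<Otimes>\<^sub>M M2) (\<lambda>z. f (snd z))"
    and integral_pair_snd: "(\<integral>z. f (snd z) \<partial>(M1 \<Otimes>\<^sub>M M2)) = integral\<^sup>L M2 f"
  using assms distr_pair_snd integrable_distr_eq[of snd "M1 \<Otimes>\<^sub>M M2" M2 f]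
    integral_distr[of snd "M1 \<Otimes>\<^sub>M M2" M2 f]
  by simp_all

lemma (in pair_prob_space)
  fixes g :: "'a \<Rightarrow> real" and f :: "'b \<Rightarrow> real"
  assumes g: "integrable M1 g" and f: "integrable M2 f"
  shows integrable_pair_fst_mult_snd: "integrable (M1 \<Otimes>\<^sub>M M2) (\<lambda>z. g (fst z) * f (snd z))"
    and integral_pair_fst_mult_snd:
      "(\<integral>z. g (fst z) * f (snd z) \<partial>(M1 \<Otimes>\<^sub>M M2)) = integral\<^sup>L M1 g * integral\<^sup>L M2 f"
proof -
  have [measurable]: "g \<in> borel_measurable M1" "f \<in> borel_measurable M2"
    using f g by auto
  show int: "integrable (M1 \<Otimes>\<^sub>M M2) (\<lambda>z. g (fst z) * f (snd z))"
  proof (rule Fubini_integrable)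
    have "integrable M1 (\<lambda>x. \<bar>g x\<bar> * (\<integral>y. \<bar>f y\<bar> \<partial>M2))"
      using g by simp
    then show "integrable M1 (\<lambda>x. \<integral>y. norm (g (fst (x, y)) * f (snd (x, y))) \<partial>M2)"
      by (simp add: abs_mult)
    show "AE x in M1. integrable M2 (\<lambda>y. g (fst (x, y)) * f (snd (x, y)))"
      using f by simp
  qed measurable
  have "(\<integral>z. g (fst z) * f (snd z) \<partial>(M1 \<Otimes>\<^sub>M M2)) = (\<integral>x. (\<integral>y. g x * f y \<partial>M2) \<partial>M1)"
    using integral_fst[of "\<lambda>x y. g x * f y"] int by (simp add: case_prod_beta')
  then show "(\<integral>z. g (fst z) * f (snd z) \<partial>(M1 \<Otimes>\<^sub>M M2)) = integral\<^sup>L M1 g * integral\<^sup>L M2 f"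
    by simp
qed

lemma (in pair_prob_space) evar_snd_minus_fst:
  fixes f :: "'b \<Rightarrow> real" and g :: "'a \<Rightarrow> real"
  assumes [measurable]: "f \<in> borel_measurable M2" "g \<in> borel_measurable M1"
    and f2: "integrable M2 (\<lambda>y. (f y)\<^sup>2)" and g2: "integrable M1 (\<lambda>x. (g x)\<^sup>2)"
  shows "evar (M1 \<Otimes>\<^sub>M M2) (\<lambda>(x, y). f y - g x) = ennreal (M2.variance f + M1.variance g)"
proof -
  have f: "integrable M2 f" and g: "integrable M1 g"
    using M2.square_integrable_imp_integrable[OF _ f2] M1.square_integrable_imp_integrable[OF _ g2]
    by simp_all
  define Y where "Y = (\<lambda>z. f (snd z) - g (fst z))"
  have Y_sq: "(Y z)\<^sup>2 = (f (snd z))\<^sup>2 + (g (fst z))\<^sup>2 - 2 * (g (fst z) * f (snd z))" for z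
    by (simp add: Y_def power2_diff)
  note integrable_pair_fst[OF g] integrable_pair_snd[OF f]
    integrable_pair_fst[OF g2] integrable_pair_snd[OF f2] integrable_pair_fst_mult_snd[OF g f]
  then have int_Y: "integrable (M1 \<Otimes>\<^sub>M M2) Y" and int_Y2: "integrable (M1 \<Otimes>\<^sub>M M2) (\<lambda>z. (Y z)\<^sup>2)"
    unfolding Y_sq by (auto simp: Y_def)
  have "expectation Y = M2.expectation f - M1.expectation g"
    using integrable_pair_fst[OF g] integrable_pair_snd[OF f]
    by (simp add: Y_def integral_pair_fst[OF g] integral_pair_snd[OF f])
  moreover have "expectation (\<lambda>z. (Y z)\<^sup>2) = M2.expectation (\<lambda>y. (f y)\<^sup>2)
      + M1.expectation (\<lambda>x. (g x)\<^sup>2) - 2 * (M1.expectation g * M2.expectation f)"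
    using integrable_pair_fst[OF g2] integrable_pair_snd[OF f2] integrable_pair_fst_mult_snd[OF g f]
    by (simp add: Y_sq integral_pair_fst[OF g2] integral_pair_snd[OF f2]
        integral_pair_fst_mult_snd[OF g f])
  ultimately have "variance Y = M2.variance f + M1.variance g"
    using variance_eq[OF int_Y int_Y2] M2.variance_eq[OF f f2] M1.variance_eq[OF g g2]
    by (simp add: power2_diff)
  moreover have "(\<lambda>(x, y). f y - g x) = Y"
    by (auto simp: Y_def)
  ultimately show ?thesis
    using int_Y2 by (simp add: evar_def)
qed

lemma evar_cong:
  assumes "\<And>x. x \<in> space P \<Longrightarrow> Y x = Y' x"
  shows "evar P Y = evar P Y'"
proof -
  have "integrable P (\<lambda>x. (Y x)\<^sup>2) \<longleftrightarrow> integrable P (\<lambda>x. (Y' x)\<^sup>2)"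
    using assms by (intro Bochner_Integration.integrable_cong) auto
  moreover have "(\<integral>y. Y y \<partial>P) = (\<integral>y. Y' y \<partial>P)"
    using assms by (rule Bochner_Integration.integral_cong[OF refl])
  ultimately show ?thesis
    using assms unfolding evar_def by (simp cong: Bochner_Integration.integral_cong)
qed

lemma is_prob_density_prob_space:
  assumes "is_prob_density M p"
  shows "prob_space (density M (\<lambda>x. ennreal (p x)))"
proof
  have "emeasure (density M (\<lambda>x. ennreal (p x))) (space M) = (\<integral>\<^sup>+ x. ennreal (p x) \<partial>M)"
    using assms by (auto simp: is_prob_density_def emeasure_density intro!: nn_integral_cong)
  then show "emeasure (density M (\<lambda>x. ennreal (p x))) (space (density M (\<lambda>x. ennreal (p x)))) = 1"
    using assms by (simp add: is_prob_density_def)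
qed

lemma is_prob_density_integral:
  assumes "is_prob_density M p"
  shows "integrable M p" and "(\<integral>x. p x \<partial>M) = 1"
proof -
  have [measurable]: "p \<in> borel_measurable M" and nonneg: "AE x in M. 0 \<le> p x"
    and mass: "(\<integral>\<^sup>+ x. ennreal (p x) \<partial>M) = 1"
    using assms by (auto simp: is_prob_density_def)
  show "integrable M p"
    using nonneg mass by (intro integrableI_nonneg) auto
  show "(\<integral>x. p x \<partial>M) = 1"
    using nonneg mass by (simp add: integral_eq_nn_integral)
qed

definition ratio_variance :: "'a measure \<Rightarrow> ('a \<Rightarrow> real) \<Rightarrow> ('a \<Rightarrow> real) \<Rightarrow> real \<Rightarrow> real" where
  "ratio_variance M p q r =
     prob_space.variance (density M (\<lambda>x. ennreal (q x))) (\<lambda>x. lratio p q x powr r)"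

(* Also valid when a density vanishes: then both sides are 0, as x / 0 = 0 and 0 powr _ = 0. *)
lemma lratio_powr_swap:
  assumes "0 \<le> p x" "0 \<le> q x"
  shows "lratio p q x powr (t - 1) = lratio q p x powr (1 - t)"
  using assms unfolding lratio_def
  by (cases "p x = 0 \<or> q x = 0") (auto simp: powr_divide powr_diff powr_minus_divide field_simps)

lemma Delta_var_eq_ratio_variance:
  assumes p1: "is_prob_density M p1" and p2: "is_prob_density M p2"
    and sq1: "integrable (density M p2) (\<lambda>x. (lratio p1 p2 x powr t)\<^sup>2)"
    and sq2: "integrable (density M p1) (\<lambda>x. (lratio p2 p1 x powr (1 - t))\<^sup>2)"
  shows "Delta_var M p1 p2 t = ennreal (ratio_variance M p1 p2 t + ratio_variance M p2 p1 (1 - t))"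
proof -
  interpret pair_prob_space "density M p1" "density M p2"
    using p1 p2 by (intro pair_prob_space.intro pair_sigma_finite.intro
        prob_space_imp_sigma_finite is_prob_density_prob_space)
  have [measurable]: "p1 \<in> borel_measurable M" "p2 \<in> borel_measurable M"
    using p1 p2 by (auto simp: is_prob_density_def)
  have "Delta_var M p1 p2 t = evar (density M p1 \<Otimes>\<^sub>M density M p2)
      (\<lambda>(x, y). lratio p1 p2 y powr t - lratio p2 p1 x powr (1 - t))"
    unfolding Delta_var_def using p1 p2
    by (intro evar_cong) (auto simp: space_pair_measure is_prob_density_def lratio_powr_swap)
  also have "\<dots> = ennreal (ratio_variance M p1 p2 t + ratio_variance M p2 p1 (1 - t))"
    unfolding ratio_variance_def using sq1 sq2
    by (intro evar_snd_minus_fst) (auto simp: lratio_def)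
  finally show ?thesis .
qed

lemma mult_divide_powr_half:
  fixes a c :: real
  assumes "0 \<le> a" "0 \<le> c"
  shows "c * (a / c) powr (1/2) = sqrt (a * c)"
  using assms by (cases "c = 0") (auto simp: powr_half_sqrt real_sqrt_divide real_sqrt_mult field_simps)

lemma mult_divide_powr_half_squared:
  fixes a c :: real
  assumes "0 \<le> a" "0 < c"
  shows "c * ((a / c) powr (1/2))\<^sup>2 = a"
  using assms by (simp add: powr_half_sqrt)

lemma ratio_variance_half:
  assumes p: "is_prob_density M p" and q: "is_prob_density M q"
    and abs_cont: "AE x in M. q x = 0 \<longrightarrow> p x = 0"
  shows "integrable (density M q) (\<lambda>x. (lratio p q x powr (1/2))\<^sup>2)"
    and "ratio_variance M p q (1/2) = 1 - (\<integral>x. sqrt (p x * q x) \<partial>M)\<^sup>2"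
proof -
  interpret Q: prob_space "density M q"
    using q by (rule is_prob_density_prob_space)
  have [measurable]: "p \<in> borel_measurable M" "q \<in> borel_measurable M"
    and nonneg: "\<And>x. x \<in> space M \<Longrightarrow> 0 \<le> p x \<and> 0 \<le> q x"
    using p q by (auto simp: is_prob_density_def)
  define f where "f = (\<lambda>x. lratio p q x powr (1/2))"
  have [measurable]: "f \<in> borel_measurable M"
    unfolding f_def lratio_def by measurable
  have f_mean: "q x * f x = sqrt (p x * q x)" if "x \<in> space M" for x
    using nonneg[OF that] by (simp add: f_def lratio_def mult_divide_powr_half)
  have f_sq: "AE x in M. q x * (f x)\<^sup>2 = p x"
    using abs_cont AE_space
  proof eventually_elim
    case (elim x)
    then show ?case
      using nonneg[of x] mult_divide_powr_half_squared[of "p x" "q x"]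
      by (cases "q x = 0") (auto simp: f_def lratio_def)
  qed
  have nonneg_AE: "AE x in M. 0 \<le> q x"
    using nonneg by auto
  have int_p: "integrable M p" and mass_p: "(\<integral>x. p x \<partial>M) = 1"
    using is_prob_density_integral[OF p] by auto
  have "integrable M (\<lambda>x. q x * (f x)\<^sup>2)"
    using integrable_cong_AE[OF _ _ f_sq] int_p by simp
  then show int_f2: "integrable (density M q) (\<lambda>x. (f x)\<^sup>2)"
    using nonneg_AE by (subst integrable_density) auto
  have "f \<in> borel_measurable (density M q)"
    by simp
  with int_f2 have int_f: "integrable (density M q) f"
    using Q.square_integrable_imp_integrable by blast
  have "Q.expectation (\<lambda>x. (f x)\<^sup>2) = (\<integral>x. q x * (f x)\<^sup>2 \<partial>M)"
    using nonneg_AE by (subst integral_density) auto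
  also have "\<dots> = (\<integral>x. p x \<partial>M)"
    using f_sq by (rule integral_cong_AE[rotated 2]) auto
  also have "\<dots> = 1"
    by (fact mass_p)
  finally have second_moment: "Q.expectation (\<lambda>x. (f x)\<^sup>2) = 1" .
  have "Q.expectation f = (\<integral>x. q x * f x \<partial>M)"
    using nonneg_AE by (subst integral_density) auto
  also have "\<dots> = (\<integral>x. sqrt (p x * q x) \<partial>M)"
    using f_mean by (rule Bochner_Integration.integral_cong[OF refl])
  finally have mean: "Q.expectation f = (\<integral>x. sqrt (p x * q x) \<partial>M)" .
  show "ratio_variance M p q (1/2) = 1 - (\<integral>x. sqrt (p x * q x) \<partial>M)\<^sup>2"
    using Q.variance_eq[OF int_f int_f2] second_moment mean by (simp add: ratio_variance_def f_def)
qed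

lemma ratio_variance_nonneg:
  assumes "is_prob_density M q"
  shows "0 \<le> ratio_variance M p q r"
proof -
  interpret Q: prob_space "density M q"
    using assms by (rule is_prob_density_prob_space)
  show ?thesis
    unfolding ratio_variance_def by (rule Q.variance_positive)
qed

definition bernoulli_density :: "real \<Rightarrow> real \<Rightarrow> real" where
  "bernoulli_density w x = (if x = 1 then w else 1 - w)"

lemma is_prob_density_bernoulli:
  assumes "0 \<le> w" "w \<le> 1"
  shows "is_prob_density (count_space {0, 1}) (bernoulli_density w)"
  using assms by (auto simp: is_prob_density_def bernoulli_density_def nn_integral_count_space_finite
      ennreal_plus[symmetric])

lemma bernoulli_Pac:
  assumes "0 < a" "a < 1" "0 < b" "b < 1"
  shows "(bernoulli_density a, bernoulli_density b) \<in> Pac (count_space {0, 1})"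
  using assms is_prob_density_bernoulli[of a] is_prob_density_bernoulli[of b]
  by (auto simp: Pac_def bernoulli_density_def)

lemma
  assumes "0 \<le> w" "w \<le> 1"
  shows integrable_bernoulli: "integrable (density (count_space {0, 1}) (bernoulli_density w)) h"
    and integral_bernoulli:
      "(\<integral>x. h x \<partial>density (count_space {0, 1}) (bernoulli_density w)) = w * h 1 + (1 - w) * h 0"
proof -
  have nonneg: "AE x in count_space {0, 1}. 0 \<le> bernoulli_density w x"
    using assms by (auto simp: bernoulli_density_def)
  show "integrable (density (count_space {0, 1}) (bernoulli_density w)) h"
    using nonneg by (subst integrable_density) (auto intro: integrable_count_space)
  show "(\<integral>x. h x \<partial>density (count_space {0, 1}) (bernoulli_density w)) = w * h 1 + (1 - w) * h 0"
    using nonneg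
    by (subst integral_density) (auto simp: bernoulli_density_def lebesgue_integral_count_space_finite)
qed

lemma variance_bernoulli:
  assumes "0 \<le> w" "w \<le> 1"
  shows "prob_space.variance (density (count_space {0, 1}) (bernoulli_density w)) h
    = w * (1 - w) * (h 1 - h 0)\<^sup>2"
  using assms by (simp add: integral_bernoulli power2_eq_square algebra_simps)

lemma ratio_variance_bernoulli:
  assumes "0 < a" "a < 1" "0 < b" "b < 1"
  shows "ratio_variance (count_space {0, 1}) (bernoulli_density a) (bernoulli_density b) r
    = b * (1 - b) * ((a / b) powr r - ((1 - a) / (1 - b)) powr r)\<^sup>2"
  unfolding ratio_variance_def using assms
  by (subst variance_bernoulli) (auto simp: lratio_def bernoulli_density_def)

lemma Delta_var_bernoulli:
  assumes "0 < a" "a < 1" "0 < b" "b < 1"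
  shows "Delta_var (count_space {0, 1}) (bernoulli_density a) (bernoulli_density b) t
    = ennreal (ratio_variance (count_space {0, 1}) (bernoulli_density a) (bernoulli_density b) t
        + ratio_variance (count_space {0, 1}) (bernoulli_density b) (bernoulli_density a) (1 - t))"
  using assms
  by (intro Delta_var_eq_ratio_variance is_prob_density_bernoulli integrable_bernoulli) auto

lemma mult_square_diff_lower_bound:
  fixes s u v :: real
  assumes "0 < s" "s \<le> 1" "1 \<le> u" "0 \<le> v" "v \<le> 1"
  shows "s * u\<^sup>2 / 8 - 1 \<le> s / 2 * (1 - s / 2) * (u - v)\<^sup>2"
proof -
  have "u\<^sup>2 / 2 - 1 \<le> (u - 1)\<^sup>2"
    using zero_le_power2[of "u - 2"] by (simp add: power2_eq_square algebra_simps)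
  also have "\<dots> \<le> (u - v)\<^sup>2"
    using assms by (intro power_mono) auto
  finally have "s / 4 * (u\<^sup>2 / 2 - 1) \<le> s / 4 * (u - v)\<^sup>2"
    using assms by (intro mult_left_mono) auto
  also have "\<dots> \<le> s / 2 * (1 - s / 2) * (u - v)\<^sup>2"
  proof (intro mult_right_mono)
    have "s * s \<le> s"
      using assms by (intro mult_left_le) auto
    then show "s / 4 \<le> s / 2 * (1 - s / 2)"
      by (simp add: algebra_simps)
  qed simp
  finally show ?thesis
    using assms by (simp add: algebra_simps)
qed

lemma ratio_variance_bernoulli_unbounded:
  assumes "1/2 < r" "0 \<le> K"
  obtains b where "0 < b" "b < 1"
    "K \<le> ratio_variance (count_space {0, 1}) (bernoulli_density (1/2)) (bernoulli_density b) r"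
proof
  define s where "s = (8 * K + 8) powr (1 / (1 - 2 * r))"
  have s_pos: "0 < s" and s_pow: "s powr (1 - 2 * r) = 8 * K + 8"
    using assms by (auto simp: s_def powr_powr)
  have "s \<le> (8 * K + 8) powr 0"
    unfolding s_def using assms by (intro powr_mono) (auto simp: divide_nonpos_neg)
  then have s_le: "s \<le> 1"
    using assms by simp
  define u where "u = (1 / s) powr r"
  define v where "v = (1 / (2 - s)) powr r"
  have u_ge: "1 \<le> u"
    unfolding u_def using assms s_pos s_le by (intro ge_one_powr_ge_zero) auto
  have v_bounds: "0 \<le> v" "v \<le> 1"
    unfolding v_def using assms s_le by (auto intro!: powr_le1)
  have "s * u\<^sup>2 = s powr (1 - 2 * r)"
    using s_pos by (simp add: u_def powr_divide powr_diff powr_power field_simps)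
  then have "s * u\<^sup>2 / 8 - 1 = K"
    using s_pow by (simp add: field_simps)
  then have "K \<le> s / 2 * (1 - s / 2) * (u - v)\<^sup>2"
    using mult_square_diff_lower_bound[OF s_pos s_le u_ge v_bounds] by linarith
  also have "\<dots> = ratio_variance (count_space {0, 1}) (bernoulli_density (1/2)) (bernoulli_density (s/2)) r"
    using s_pos s_le by (subst ratio_variance_bernoulli) (auto simp: u_def v_def field_simps)
  finally show "K \<le> ratio_variance (count_space {0, 1}) (bernoulli_density (1/2)) (bernoulli_density (s/2)) r" .
  show "0 < s / 2" "s / 2 < 1"
    using s_pos s_le by auto
qed

lemma Delta_var_SUP_infinite:
  assumes "t \<noteq> 1/2"
  shows "(SUP (N, q1, q2) \<in> {(N :: real measure, q1, q2). sigma_finite_measure N \<and> (q1, q2) \<in> Pac N}.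
           Delta_var N q1 q2 t) = \<infinity>"
proof -
  let ?N = "count_space {0 :: real, 1}" and ?B = bernoulli_density
  have large: "\<exists>a b. 0 < a \<and> a < 1 \<and> 0 < b \<and> b < 1 \<and> ennreal K \<le> Delta_var ?N (?B a) (?B b) t"
    if K_nonneg: "0 \<le> K" for K
  proof (cases "1/2 < t")
    case True
    obtain b where b: "0 < b" "b < 1" "K \<le> ratio_variance ?N (?B (1/2)) (?B b) t"
      by (rule ratio_variance_bernoulli_unbounded[OF True K_nonneg])
    moreover have "0 \<le> ratio_variance ?N (?B b) (?B (1/2)) (1 - t)"
      by (intro ratio_variance_nonneg is_prob_density_bernoulli) auto
    ultimately have "ennreal K \<le> Delta_var ?N (?B (1/2)) (?B b) t"
      by (simp add: Delta_var_bernoulli ennreal_leI)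
    with b show ?thesis
      by (intro exI[of _ "1/2"] exI[of _ b]) auto
  next
    case False
    then have "1/2 < 1 - t"
      using assms by simp
    then obtain b where b: "0 < b" "b < 1" "K \<le> ratio_variance ?N (?B (1/2)) (?B b) (1 - t)"
      using K_nonneg by (rule ratio_variance_bernoulli_unbounded)
    moreover have "0 \<le> ratio_variance ?N (?B b) (?B (1/2)) t"
      by (intro ratio_variance_nonneg is_prob_density_bernoulli) auto
    ultimately have "ennreal K \<le> Delta_var ?N (?B b) (?B (1/2)) t"
      by (simp add: Delta_var_bernoulli ennreal_leI)
    with b show ?thesis
      by (intro exI[of _ b] exI[of _ "1/2"]) auto
  qed
  have "\<exists>i \<in> {(N :: real measure, q1, q2). sigma_finite_measure N \<and> (q1, q2) \<in> Pac N}.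
      x < (case i of (N, q1, q2) \<Rightarrow> Delta_var N q1 q2 t)" if "x < \<top>" for x
  proof -
    obtain K where K: "x = ennreal K" "0 \<le> K"
      using \<open>x < \<top>\<close> by (cases x) auto
    then obtain a b where ab: "0 < a" "a < 1" "0 < b" "b < 1"
      and "ennreal (K + 1) \<le> Delta_var ?N (?B a) (?B b) t"
      using large[of "K + 1"] by auto
    moreover have "x < ennreal (K + 1)"
      using K by (simp add: ennreal_lessI)
    ultimately show ?thesis
      using bernoulli_Pac[OF ab] sigma_finite_measure_count_space_finite[of "{0 :: real, 1}"]
      by (intro bexI[of _ "(?N, ?B a, ?B b)"]) auto
  qed
  then show ?thesis
    by (simp add: SUP_eq_top_iff infinity_ennreal_def)
qed

theorem lemma4:
  fixes M :: "'a measure" and p1 p2 :: "'a \<Rightarrow> real"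
  assumes "sigma_finite_measure M"
    and "(p1, p2) \<in> Pac M"
  shows "(Delta_var M p1 p2 (1/2) = ennreal (2 * (1 - (\<integral> x. sqrt (p1 x * p2 x) \<partial>M)\<^sup>2))
           \<and> Delta_var M p1 p2 (1/2) < \<infinity>)
         \<and> (\<forall>t::real. t \<noteq> 1/2 \<longrightarrow>
              (SUP (N, q1, q2) \<in> {(N :: real measure, q1, q2). sigma_finite_measure N \<and> (q1, q2) \<in> Pac N}.
                 Delta_var N q1 q2 t) = \<infinity>)"
proof -
  have p1: "is_prob_density M p1" and p2: "is_prob_density M p2"
    and abs_cont: "AE x in M. p1 x = 0 \<longleftrightarrow> p2 x = 0"
    using assms(2) by (auto simp: Pac_def)
  have "AE x in M. p2 x = 0 \<longrightarrow> p1 x = 0" "AE x in M. p1 x = 0 \<longrightarrow> p2 x = 0"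
    using abs_cont by auto
  note half12 = ratio_variance_half[OF p1 p2 this(1)] and half21 = ratio_variance_half[OF p2 p1 this(2)]
  have "(\<integral>x. sqrt (p2 x * p1 x) \<partial>M) = (\<integral>x. sqrt (p1 x * p2 x) \<partial>M)"
    by (simp add: mult.commute)
  then have "Delta_var M p1 p2 (1/2) = ennreal (2 * (1 - (\<integral> x. sqrt (p1 x * p2 x) \<partial>M)\<^sup>2))"
    using Delta_var_eq_ratio_variance[OF p1 p2 half12(1)] half12 half21 by simp
  then show ?thesis
    using Delta_var_SUP_infinite by simp
qed

end
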